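(* Let $H=l_2$ be the real separable infinite-dimensional Hilbert space with zero $\theta$. Let $d\in H$ with $\|d\|=1$ and let $\gamma\in[0,\pi]$ with $\gamma\leqslant\arccos\frac14$. Then $C(-\tfrac12 d,\tfrac12 d,\gamma)\subset\overline{B}(\theta,1)$.
   Context: $\overline{B}(\theta,1)=\{x\in H:\|x\|\leqslant1\}$. For $x,y\in H$, $\angle(x,y)=\arccos\frac{\langle x,y\rangle}{\|x\|\,\|y\|}\in[0,\pi]$, with $\angle(x,y)=0$ if $x=\theta$ or $y=\theta$. For $s\ne e$ and $\gamma\in[0,\pi]$, the ommatidium is $C(s,e,\gamma)=\{x\in H:\ \|x-s\|\leqslant\|e-s\|\text{ and }\angle(x-s,e-s)\leqslant\gamma\}$. *)

theory Defs
  imports "HOL-Analysis.Analysis"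
begin

definition vangle :: "'a::real_inner \<Rightarrow> 'a \<Rightarrow> real" where
  "vangle x y = (if x = 0 \<or> y = 0 then 0 else arccos (inner x y / (norm x * norm y)))"

definition ommatidium :: "'a::real_inner \<Rightarrow> 'a \<Rightarrow> real \<Rightarrow> 'a set" where
  "ommatidium s e \<gamma> = {x. norm (x - s) \<le> norm (e - s) \<and> vangle (x - s) (e - s) \<le> \<gamma>}"

end

theory Submission
  imports Defs
begin

text \<open>Put \<open>y = x + d/2\<close>, so that \<open>\<parallel>y\<parallel> \<le> 1\<close> and the angle between \<open>y\<close> and \<open>d\<close> is at most
  \<open>arccos (1/4)\<close>, i.e. \<open>\<langle>y, d\<rangle> \<ge> \<parallel>y\<parallel>/4\<close>. Then
  \<open>\<parallel>x\<parallel>\<^sup>2 = \<parallel>y\<parallel>\<^sup>2 - \<langle>y, d\<rangle> + 1/4 \<le> \<parallel>y\<parallel>\<^sup>2 - \<parallel>y\<parallel>/4 + 1/4 \<le> 1\<close>, the last step because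
  \<open>\<parallel>y\<parallel>\<^sup>2 \<le> \<parallel>y\<parallel> \<le> 1\<close>.\<close>

lemma inner_ge_if_vangle_le_arccos:
  fixes x y :: "'a::real_inner"
  assumes "vangle x y \<le> arccos c" and "\<bar>c\<bar> \<le> 1"
  shows "c * (norm x * norm y) \<le> inner x y"
proof (cases "x = 0 \<or> y = 0")
  case True
  then show ?thesis by auto
next
  case False
  then have pos: "norm x * norm y > 0" by simp
  have "\<bar>inner x y\<bar> \<le> norm x * norm y" by (rule Cauchy_Schwarz_ineq2)
  then have cos_bound: "\<bar>inner x y / (norm x * norm y)\<bar> \<le> 1"
    using pos by (simp add: abs_divide)
  have "arccos (inner x y / (norm x * norm y)) \<le> arccos c"
    using assms(1) False by (simp add: vangle_def)
  then have "c \<le> inner x y / (norm x * norm y)"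
    using arccos_le_mono[OF cos_bound assms(2)] by simp
  then show ?thesis using pos by (simp add: field_simps)
qed

lemma norm_sub_half_unit_square:
  fixes y d :: "'a::real_inner"
  assumes "norm d = 1"
  shows "(norm (y - (1/2) *\<^sub>R d))\<^sup>2 = (norm y)\<^sup>2 - inner y d + 1/4"
  using dot_norm_neg[of y "(1/2) *\<^sub>R d"] assms by (simp add: power_mult_distrib power2_eq_square)

lemma ommatidium_half_unit_subset_cball:
  fixes d :: "'a::real_inner"
  assumes d: "norm d = 1" and \<gamma>: "\<gamma> \<le> arccos (1/4)"
  shows "ommatidium (- (1/2) *\<^sub>R d) ((1/2) *\<^sub>R d) \<gamma> \<subseteq> cball 0 1"
proof
  fix x assume "x \<in> ommatidium (- (1/2) *\<^sub>R d) ((1/2) *\<^sub>R d) \<gamma>"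
  define y where "y = x + (1/2) *\<^sub>R d"
  have axis: "(1/2) *\<^sub>R d - - (1/2) *\<^sub>R d = d"
    by (simp flip: scaleR_add_left)
  have "x - - (1/2) *\<^sub>R d = y"
    by (simp add: y_def)
  with \<open>x \<in> _\<close> have ny: "norm y \<le> 1" and "vangle y d \<le> arccos (1/4)"
    using d \<gamma> unfolding ommatidium_def axis by auto
  then have "norm y / 4 \<le> inner y d"
    using inner_ge_if_vangle_le_arccos[of y d "1/4"] d by simp
  moreover have "(norm y)\<^sup>2 \<le> norm y"
    using ny by (simp add: power2_eq_square mult_left_le)
  moreover have "(norm x)\<^sup>2 = (norm y)\<^sup>2 - inner y d + 1/4"
    using norm_sub_half_unit_square[OF d, of y] by (simp add: y_def)
  ultimately have "(norm x)\<^sup>2 \<le> 1"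
    using ny by simp
  then show "x \<in> cball 0 1"
    by (simp add: power_le_one_iff abs_le_square_iff)
qed

theorem lemma12:
  fixes d :: "'a::{real_inner, complete_space}" and \<gamma> :: real
  assumes separable: "separable_space (euclidean :: 'a topology)"
    and inf_dim: "\<not> (\<exists>B :: 'a set. finite B \<and> span B = UNIV)"
    and d: "norm d = 1"
    and g0: "0 \<le> \<gamma>" and gpi: "\<gamma> \<le> pi"
    and g: "\<gamma> \<le> arccos (1/4)"
  shows "ommatidium (- (1/2) *\<^sub>R d) ((1/2) *\<^sub>R d) \<gamma> \<subseteq> cball 0 1"
  using ommatidium_half_unit_subset_cball[OF d g] .

end
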